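(* Let $\mathcal{R}$ be a rational set of regular languages over an alphabet $\Sigma$. Then its complement $\overline{\mathcal{R}}=\{L\subseteq\Sigma^*\mid L\notin\mathcal{R}\}$ is not a rational set of regular languages.
   Context: An alphabet is a nonempty finite set. A regular language substitution $\varphi:\Delta\to2^{\Sigma^*}$ maps each symbol of an alphabet $\Delta$ to a regular language over $\Sigma$, extended by $\varphi(\delta w)=\varphi(\delta)\varphi(w)$. A set $\mathcal{R}$ of regular languages over $\Sigma$ is a rational set of regular languages if there are an alphabet $\Delta$, a regular $K\subseteq\Delta^+$ and a regular language substitution $\varphi$ with $\mathcal{R}=\{\varphi(w)\mid w\in K\}$. *)

theory Defs
  imports Main
begin

definition alphabet :: "'a set \<Rightarrow> bool" where
  "alphabet \<Sigma> \<longleftrightarrow> finite \<Sigma> \<and> \<Sigma> \<noteq> {}"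

definition lconc :: "'a list set \<Rightarrow> 'a list set \<Rightarrow> 'a list set" where
  "lconc A B = {u @ v | u v. u \<in> A \<and> v \<in> B}"

inductive_set lstar :: "'a list set \<Rightarrow> 'a list set" for A :: "'a list set" where
  lstar_Nil: "[] \<in> lstar A"
| lstar_app: "u \<in> A \<Longrightarrow> v \<in> lstar A \<Longrightarrow> u @ v \<in> lstar A"

inductive regular :: "'a set \<Rightarrow> 'a list set \<Rightarrow> bool" for \<Sigma> :: "'a set" where
  reg_empty: "regular \<Sigma> {}"
| reg_eps: "regular \<Sigma> {[]}"
| reg_sym: "a \<in> \<Sigma> \<Longrightarrow> regular \<Sigma> {[a]}"
| reg_union: "regular \<Sigma> A \<Longrightarrow> regular \<Sigma> B \<Longrightarrow> regular \<Sigma> (A \<union> B)"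
| reg_conc: "regular \<Sigma> A \<Longrightarrow> regular \<Sigma> B \<Longrightarrow> regular \<Sigma> (lconc A B)"
| reg_star: "regular \<Sigma> A \<Longrightarrow> regular \<Sigma> (lstar A)"

fun subst_word :: "('d \<Rightarrow> 'a list set) \<Rightarrow> 'd list \<Rightarrow> 'a list set" where
  "subst_word \<phi> [] = {[]}"
| "subst_word \<phi> (d # w) = lconc (\<phi> d) (subst_word \<phi> w)"

text \<open>Rational sets of regular languages. Since alphabets are finite, the
  alphabet Delta can be taken, without loss of generality, as a set of naturals.\<close>
definition rational_set_of_regular :: "'a set \<Rightarrow> 'a list set set \<Rightarrow> bool" where
  "rational_set_of_regular \<Sigma> \<R> \<longleftrightarrow>
     (\<exists>(\<Delta>::nat set) K \<phi>. alphabet \<Delta> \<and> K \<subseteq> lists \<Delta> - {[]} \<and> regular \<Delta> K \<and>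
        (\<forall>d\<in>\<Delta>. regular \<Sigma> (\<phi> d)) \<and> \<R> = subst_word \<phi> ` K)"

end

theory Submission
  imports Defs "HOL-Library.Equipollence"
begin

text \<open>A rational set of regular languages is the image of a set of words over a finite
  alphabet, hence countable. A set of languages and its complement together cover all of
  \<open>Pow (lists \<Sigma>)\<close>, which is uncountable by Cantor's theorem since \<open>lists \<Sigma>\<close> is infinite;
  so they cannot both be rational.\<close>

lemma countable_Pow_iff: "countable (Pow X) \<longleftrightarrow> finite X"
proof
  assume "countable (Pow X)"
  then have "Pow X \<lesssim> (UNIV :: nat set)"
    unfolding countable_def lepoll_def by blast
  show "finite X"
  proof (rule ccontr)
    assume "infinite X"
    then have "(UNIV :: nat set) \<lesssim> X"
      by (simp add: infinite_le_lepoll)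
    with \<open>Pow X \<lesssim> UNIV\<close> have "Pow X \<lesssim> X"
      by (rule lepoll_trans)
    then show False
      using lesspoll_Pow_self lesspoll_def lepoll_antisym by blast
  qed
qed (simp add: countable_finite)

lemma infinite_lists: "A \<noteq> {} \<Longrightarrow> infinite (lists A)"
proof
  assume "A \<noteq> {}" and "finite (lists A)"
  then obtain a where "a \<in> A" by blast
  then have "range (\<lambda>n. replicate n a) \<subseteq> lists A" by auto
  moreover have "inj (\<lambda>n::nat. replicate n a)" by (auto intro: injI)
  ultimately show False
    using \<open>finite (lists A)\<close> by (meson finite_imageD finite_subset infinite_UNIV_nat)
qed

lemma countable_rational_set_of_regular:
  assumes "rational_set_of_regular \<Sigma> \<R>"
  shows "countable \<R>"
proof -
  obtain \<Delta> :: "nat set" and K \<phi> where "K \<subseteq> lists \<Delta> - {[]}" and "\<R> = subst_word \<phi> ` K"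
    using assms unfolding rational_set_of_regular_def by blast
  moreover have "countable K"
    using \<open>K \<subseteq> lists \<Delta> - {[]}\<close> countable_subset by blast
  ultimately show ?thesis by simp
qed

theorem proposition3:
  fixes \<Sigma> :: "'a set" and \<R> :: "'a list set set"
  assumes "alphabet \<Sigma>"
    and "rational_set_of_regular \<Sigma> \<R>"
  shows "\<not> rational_set_of_regular \<Sigma> {L. L \<subseteq> lists \<Sigma> \<and> L \<notin> \<R>}"
proof
  assume "rational_set_of_regular \<Sigma> {L. L \<subseteq> lists \<Sigma> \<and> L \<notin> \<R>}"
  then have "countable ({L. L \<subseteq> lists \<Sigma> \<and> L \<notin> \<R>} \<union> \<R>)"
    using assms(2) by (simp add: countable_rational_set_of_regular)
  then have "countable (Pow (lists \<Sigma>))"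
    by (rule countable_subset[rotated]) auto
  moreover have "infinite (lists \<Sigma>)"
    using assms(1) by (simp add: alphabet_def infinite_lists)
  ultimately show False
    by (simp add: countable_Pow_iff)
qed

end
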